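(* Let $(X,d,\kappa)$ be a digital metric space with $X$ finite, and let $T:X\to X$. If $T$ is a digital contraction map, then there exists $\phi\in\Phi$ such that $T$ is $\phi$-contractive. Conversely (with $X$ finite), if $T$ is $\phi$-contractive for some $\phi\in\Phi$, then $T$ is a digital contraction map.
   Context: A digital metric space is a triple $(X,d,\kappa)$ where $X\subset\mathbb{Z}^n$ for some positive integer $n$, $\kappa$ is an adjacency relation on $X$, and $d$ is a metric on $X$. $\Phi$ is the set of functions $\phi:[0,\infty)\to[0,\infty)$ that are increasing, satisfy $\phi(t)=0$ iff $t=0$, and $\phi(t)<t$ for $t>0$. $T$ is $\phi$-contractive if $\phi(d(T(x),T(y)))<\phi(d(x,y))$ for all $x,y\in X$ with $x\ne y$. $T$ is a digital contraction map if there is $\alpha\in(0,1)$ with $d(T(x),T(y))\le\alpha\,d(x,y)$ for all $x,y\in X$. *)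

theory Defs
  imports "HOL-Analysis.Analysis"
begin

definition metric_on :: "('a set) \<Rightarrow> ('a \<Rightarrow> 'a \<Rightarrow> real) \<Rightarrow> bool" where
  "metric_on X d \<longleftrightarrow>
     (\<forall>x\<in>X. \<forall>y\<in>X. d x y \<ge> 0 \<and> (d x y = 0 \<longleftrightarrow> x = y) \<and> d x y = d y x) \<and>
     (\<forall>x\<in>X. \<forall>y\<in>X. \<forall>z\<in>X. d x z \<le> d x y + d y z)"

definition adjacency_on :: "('a set) \<Rightarrow> ('a \<Rightarrow> 'a \<Rightarrow> bool) \<Rightarrow> bool" where
  "adjacency_on X \<kappa> \<longleftrightarrow>
     (\<forall>x y. \<kappa> x y \<longrightarrow> x \<in> X \<and> y \<in> X) \<and> (\<forall>x y. \<kappa> x y \<longrightarrow> \<kappa> y x) \<and> (\<forall>x. \<not> \<kappa> x x)"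

definition digital_metric_space ::
  "((int, 'n::finite) vec) set \<Rightarrow> (int ^ 'n \<Rightarrow> int ^ 'n \<Rightarrow> real) \<Rightarrow> (int ^ 'n \<Rightarrow> int ^ 'n \<Rightarrow> bool) \<Rightarrow> bool" where
  "digital_metric_space X d \<kappa> \<longleftrightarrow> metric_on X d \<and> adjacency_on X \<kappa>"

definition Phi :: "(real \<Rightarrow> real) set" where
  "Phi = {\<phi>. (\<forall>t\<ge>0. \<phi> t \<ge> 0) \<and> mono_on {0..} \<phi> \<and>
               (\<forall>t\<ge>0. \<phi> t = 0 \<longleftrightarrow> t = 0) \<and> (\<forall>t>0. \<phi> t < t)}"

definition phi_contractive :: "'a set \<Rightarrow> ('a \<Rightarrow> 'a \<Rightarrow> real) \<Rightarrow> ('a \<Rightarrow> 'a) \<Rightarrow> (real \<Rightarrow> real) \<Rightarrow> bool" where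
  "phi_contractive X d T \<phi> \<longleftrightarrow>
     (\<forall>x\<in>X. \<forall>y\<in>X. x \<noteq> y \<longrightarrow> \<phi> (d (T x) (T y)) < \<phi> (d x y))"

definition digital_contraction :: "'a set \<Rightarrow> ('a \<Rightarrow> 'a \<Rightarrow> real) \<Rightarrow> ('a \<Rightarrow> 'a) \<Rightarrow> bool" where
  "digital_contraction X d T \<longleftrightarrow>
     (\<exists>\<alpha>. 0 < \<alpha> \<and> \<alpha> < 1 \<and> (\<forall>x\<in>X. \<forall>y\<in>X. d (T x) (T y) \<le> \<alpha> * d x y))"

end

theory Submission
  imports Defs
begin

text \<open>Both notions are equivalent, on a finite space, to T strictly decreasing all positive
  distances. A contraction factor \<alpha> < 1 gives this directly, and then t/2 is a valid \<phi>.
  Conversely a monotone \<phi> cannot strictly decrease unless its argument does; finiteness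
  lets the largest of the finitely many ratios d(Tx,Ty)/d(x,y) < 1 serve as \<alpha>.\<close>

definition strictly_contractive :: "'a set \<Rightarrow> ('a \<Rightarrow> 'a \<Rightarrow> real) \<Rightarrow> ('a \<Rightarrow> 'a) \<Rightarrow> bool" where
  "strictly_contractive X d T \<longleftrightarrow> (\<forall>x\<in>X. \<forall>y\<in>X. x \<noteq> y \<longrightarrow> d (T x) (T y) < d x y)"

lemma metric_on_nonneg: "metric_on X d \<Longrightarrow> x \<in> X \<Longrightarrow> y \<in> X \<Longrightarrow> 0 \<le> d x y"
  unfolding metric_on_def by blast

lemma metric_on_self: "metric_on X d \<Longrightarrow> x \<in> X \<Longrightarrow> d x x = 0"
  unfolding metric_on_def by blast

lemma metric_on_pos: "metric_on X d \<Longrightarrow> x \<in> X \<Longrightarrow> y \<in> X \<Longrightarrow> x \<noteq> y \<Longrightarrow> 0 < d x y"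
  unfolding metric_on_def by (metis less_eq_real_def)

lemma half_in_Phi: "(\<lambda>t. t / 2) \<in> Phi"
  unfolding Phi_def by (auto simp: mono_on_def)

lemma digital_contraction_imp_strictly_contractive:
  assumes "metric_on X d" and "digital_contraction X d T"
  shows "strictly_contractive X d T"
  unfolding strictly_contractive_def
proof (intro ballI impI)
  obtain \<alpha> where "\<alpha> < 1" and \<alpha>: "\<forall>x\<in>X. \<forall>y\<in>X. d (T x) (T y) \<le> \<alpha> * d x y"
    using assms(2) unfolding digital_contraction_def by blast
  fix x y assume xy: "x \<in> X" "y \<in> X" "x \<noteq> y"
  have "d (T x) (T y) \<le> \<alpha> * d x y" using \<alpha> xy by blast
  also have "\<dots> < d x y" using metric_on_pos[OF assms(1) xy] \<open>\<alpha> < 1\<close> by simp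
  finally show "d (T x) (T y) < d x y" .
qed

lemma strictly_contractive_imp_phi_contractive:
  assumes "metric_on X d" and "T ` X \<subseteq> X"
    and "strict_mono_on {0..} \<phi>" and "strictly_contractive X d T"
  shows "phi_contractive X d T \<phi>"
  unfolding phi_contractive_def
proof (intro ballI impI)
  fix x y assume xy: "x \<in> X" "y \<in> X" "x \<noteq> y"
  then have "T x \<in> X" "T y \<in> X" using assms(2) by auto
  moreover have "d (T x) (T y) < d x y"
    using assms(4) xy unfolding strictly_contractive_def by blast
  ultimately show "\<phi> (d (T x) (T y)) < \<phi> (d x y)"
    using assms(3) metric_on_nonneg[OF assms(1)] xy by (simp add: strict_mono_on_def)
qed

lemma phi_contractive_imp_strictly_contractive:
  assumes "metric_on X d" and "T ` X \<subseteq> X"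
    and "\<phi> \<in> Phi" and "phi_contractive X d T \<phi>"
  shows "strictly_contractive X d T"
  unfolding strictly_contractive_def
proof (intro ballI impI)
  fix x y assume xy: "x \<in> X" "y \<in> X" "x \<noteq> y"
  show "d (T x) (T y) < d x y"
  proof (rule ccontr)
    assume "\<not> d (T x) (T y) < d x y"
    moreover have "T x \<in> X" "T y \<in> X" using assms(2) xy by auto
    moreover have "mono_on {0..} \<phi>" using assms(3) by (simp add: Phi_def)
    ultimately have "\<phi> (d x y) \<le> \<phi> (d (T x) (T y))"
      using metric_on_nonneg[OF assms(1)] xy by (simp add: mono_on_def)
    moreover have "\<phi> (d (T x) (T y)) < \<phi> (d x y)"
      using assms(4) xy unfolding phi_contractive_def by blast
    ultimately show False by simp
  qed
qed

lemma finite_strictly_contractive_imp_digital_contraction: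
  assumes "metric_on X d" and "finite X" and "T ` X \<subseteq> X"
    and "strictly_contractive X d T"
  shows "digital_contraction X d T"
proof -
  define ratios where
    "ratios = (\<lambda>(x, y). d (T x) (T y) / d x y) ` {(x, y) \<in> X \<times> X. x \<noteq> y}"
  \<comment> \<open>Inserting 1/2 keeps the maximum taken over a nonempty set (ratios is empty if
    X has at most one point) and makes \<alpha> positive.\<close>
  define \<alpha> where "\<alpha> = Max (insert (1/2) ratios)"
  have "finite {(x, y) \<in> X \<times> X. x \<noteq> y}"
    using assms(2) by (auto intro: finite_subset[of _ "X \<times> X"])
  then have "finite ratios" unfolding ratios_def by simp
  have "r < 1" if "r \<in> ratios" for r
    using that assms(4) metric_on_pos[OF assms(1)]
    unfolding ratios_def strictly_contractive_def by auto
  then have "\<alpha> < 1" unfolding \<alpha>_def using \<open>finite ratios\<close> by simp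
  have "1/2 \<le> \<alpha>" unfolding \<alpha>_def using \<open>finite ratios\<close> by (intro Max_ge) auto
  have bound: "d (T x) (T y) \<le> \<alpha> * d x y" if xy: "x \<in> X" "y \<in> X" for x y
  proof (cases "x = y")
    case True
    then show ?thesis using assms(1,3) xy by (simp add: metric_on_self image_subset_iff)
  next
    case False
    then have "d (T x) (T y) / d x y \<in> ratios" unfolding ratios_def using xy by force
    then have "d (T x) (T y) / d x y \<le> \<alpha>" unfolding \<alpha>_def using \<open>finite ratios\<close> by simp
    then show ?thesis using metric_on_pos[OF assms(1) xy False] by (simp add: divide_le_eq)
  qed
  show ?thesis unfolding digital_contraction_def
    using \<open>1/2 \<le> \<alpha>\<close> \<open>\<alpha> < 1\<close> bound by (intro exI[of _ \<alpha>]) auto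
qed

theorem proposition7p5:
  fixes X :: "(int ^ 'n) set" and d :: "int ^ 'n \<Rightarrow> int ^ 'n \<Rightarrow> real"
    and \<kappa> :: "int ^ 'n \<Rightarrow> int ^ 'n \<Rightarrow> bool" and T :: "int ^ 'n \<Rightarrow> int ^ 'n"
  assumes "digital_metric_space X d \<kappa>" and "finite X" and "T ` X \<subseteq> X"
  shows "(digital_contraction X d T \<longrightarrow> (\<exists>\<phi>\<in>Phi. phi_contractive X d T \<phi>)) \<and>
         ((\<exists>\<phi>\<in>Phi. phi_contractive X d T \<phi>) \<longrightarrow> digital_contraction X d T)"
proof (intro conjI impI)
  have metric: "metric_on X d" using assms(1) by (simp add: digital_metric_space_def)
  show "\<exists>\<phi>\<in>Phi. phi_contractive X d T \<phi>" if "digital_contraction X d T"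
  proof
    have "strict_mono_on {0..} (\<lambda>t::real. t / 2)" by (simp add: strict_mono_on_def)
    then show "phi_contractive X d T (\<lambda>t. t / 2)"
      using strictly_contractive_imp_phi_contractive digital_contraction_imp_strictly_contractive
        metric assms(3) that by blast
  qed (rule half_in_Phi)
  show "digital_contraction X d T" if "\<exists>\<phi>\<in>Phi. phi_contractive X d T \<phi>"
    using that phi_contractive_imp_strictly_contractive
      finite_strictly_contractive_imp_digital_contraction metric assms(2,3) by blast
qed

end
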